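(* In the setting below, assume $Z^j\epsilon_{\bullet,j}\neq0$ for all $j$. If for some constant $c>1$ the penalty level satisfies $$\lambda\ge\frac{c+1}{c-1}\max_{i\in[n]}\Big(\sum_{j\in[p]}\frac{(Z^j_{i,\bullet}\epsilon_{\bullet,j})^2}{\|Z^j\epsilon_{\bullet,j}\|_2^2}\Big)^{1/2},$$ then $\|\widehat\Delta_{O^c,\bullet}\|_{2,1}\le c\,\|\widehat\Delta_{O,\bullet}\|_{2,1}$.
   Context: Setting. Let $n,p\ge 1$, $[n]=\{1,\dots,n\}$. $X=Y+E^*\in\mathbb R^{n\times p}$ where (C1) the rows of $Y$ are independent $\mathcal N_p(\mu^*,\Sigma^* )$, $\Sigma^*$ positive definite; (C2) $E^*$ deterministic, $[n]=I\cup O$ a partition with the rows of $E^*$ indexed by $I$ equal to zero, and every row of $E^*(\Sigma^* )^{-1/2}$ of Euclidean norm at most $M_E\sqrt p$; $\mu^*=0$. $\Omega^*=(\Sigma^* )^{-1}$ with diagonal entries $\omega^*_{jj}$, $B^*=\Omega^*\mathrm{diag}(\Omega^* )^{-1}$, $X^{(n)}=X/\sqrt n$, $\Theta^*=E^*B^*/\sqrt n$, $\xi=X^{(n)}B^*-\Theta^*$, $\epsilon_{ij}=\sqrt n(\omega^*_{jj})^{1/2}\xi_{ij}$ (each column $\epsilon_{\bullet,j}$ is $\mathcal N_n(0,I_n)$ and independent of $X_{\bullet,j^c}$). Notation: $A_{i,\bullet}$, $A_{\bullet,j}$ rows/columns, $A_{K,\bullet}$ rows indexed by $K$, $j^c=[p]\setminus\{j\}$,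 $O^c=I$, $\|A\|_{q_1,q_2}=(\sum_i\|A_{i,\bullet}\|_{q_1}^{q_2})^{1/q_2}$. $Z^j$ is the orthogonal projector in $\mathbb R^n$ onto the orthogonal complement of the span of the columns of $X_{\bullet,j^c}$. Estimator: $\widehat\Theta$ minimizes over $\Theta\in\mathbb R^{n\times p}$ the function $\sum_{j=1}^p\|Z^j(X^{(n)}_{\bullet,j}-\Theta_{\bullet,j})\|_2+\lambda\|\Theta\|_{2,1}$, and $\widehat\Delta=\widehat\Theta-\Theta^*$. *)

theory Defs
  imports "HOL-Analysis.Analysis"
begin

definition perp_proj :: "('a::euclidean_space) set \<Rightarrow> 'a \<Rightarrow> 'a" where
  "perp_proj S v = (THE w. w \<in> orthogonal_comp (span S) \<and> v - w \<in> span S)"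

definition Zproj :: "real^'p^'n \<Rightarrow> 'p \<Rightarrow> real^'n \<Rightarrow> real^'n" where
  "Zproj X j = perp_proj {column k X | k. k \<noteq> j}"

definition norm21 :: "'n set \<Rightarrow> real^'p^'n \<Rightarrow> real" where
  "norm21 K A = (\<Sum>i\<in>K. norm (A $ i))"

definition objective :: "real \<Rightarrow> real^'p^'n \<Rightarrow> real^'p^'n \<Rightarrow> real" where
  "objective lam X Th =
     (\<Sum>j\<in>UNIV. norm (Zproj X j (column j ((1 / sqrt (real CARD('n))) *\<^sub>R X) - column j Th)))
     + lam * norm21 UNIV Th"

definition pos_def :: "real^'p^'p \<Rightarrow> bool" where
  "pos_def A \<longleftrightarrow> transpose A = A \<and> (\<forall>x. x \<noteq> 0 \<longrightarrow> x \<bullet> (A *v x) > 0)"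

end

theory Submission
  imports Defs
begin

text \<open>Let \<open>u\<^sub>j = Z\<^sup>j \<xi>\<^sub>\<bullet>\<^sub>j\<close> and \<open>\<Delta> = \<Theta> - \<Theta>\<^sup>*\<close>. Since \<open>B\<^sup>*\<^sub>j\<^sub>j = 1\<close> and \<open>Z\<^sup>j\<close>
  annihilates the other columns of \<open>X\<close>, the \<open>j\<close>-th term of the objective at \<open>\<Theta>\<close> is
  \<open>|u\<^sub>j - Z\<^sup>j \<Delta>\<^sub>\<bullet>\<^sub>j|\<close>. As \<open>u\<^sub>j\<close> lies in the range of the orthogonal projector \<open>Z\<^sup>j\<close>,
  Cauchy-Schwarz gives \<open>|u\<^sub>j - Z\<^sup>j d| \<ge> |u\<^sub>j| - \<langle>u\<^sub>j, d\<rangle> / |u\<^sub>j|\<close>, so comparing the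
  objective at the minimiser with its value at \<open>\<Theta>\<^sup>*\<close> gives the basic inequality
  \<open>\<lambda> (|\<Theta>\<^sup>^|\<^sub>2\<^sub>,\<^sub>1 - |\<Theta>\<^sup>*|\<^sub>2\<^sub>,\<^sub>1) \<le> \<Sum>\<^sub>j \<langle>u\<^sub>j, \<Delta>\<^sub>\<bullet>\<^sub>j\<rangle> / |u\<^sub>j|\<close>.
  Regrouping the right-hand side by rows and using Cauchy-Schwarz in each row bounds it by
  \<open>m |\<Delta>|\<^sub>2\<^sub>,\<^sub>1\<close>, where \<open>m\<close> is the maximum in the hypothesis on \<open>\<lambda>\<close>; the columns of \<open>\<epsilon>\<close>
  are nonzero multiples of those of \<open>\<xi>\<close>, which normalisation does not see. Since \<open>\<Theta>\<^sup>*\<close>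
  vanishes on \<open>O\<^sup>c\<close>, the left-hand side is at least \<open>\<lambda> (|\<Delta>\<^sub>O\<^sub>c|\<^sub>2\<^sub>,\<^sub>1 - |\<Delta>\<^sub>O|\<^sub>2\<^sub>,\<^sub>1)\<close>,
  and \<open>\<lambda> \<ge> (c+1)/(c-1) m\<close> turns the resulting inequality into the cone condition.\<close>

lemma perp_proj_unique:
  fixes S :: "'a::euclidean_space set"
  assumes "w \<in> orthogonal_comp (span S)" "v - w \<in> span S"
  shows "perp_proj S v = w"
proof -
  have unique: "w' = w" if "w' \<in> orthogonal_comp (span S)" "v - w' \<in> span S" for w'
  proof -
    have "w - w' = (v - w') - (v - w)" by simp
    hence "w - w' \<in> span S" using that(2) assms(2) span_diff by metis
    moreover have "w - w' \<in> orthogonal_comp (span S)"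
      using assms(1) that(1) subspace_orthogonal_comp subspace_diff by blast
    ultimately have "orthogonal (w - w') (w - w')"
      by (auto simp: orthogonal_comp_def)
    thus ?thesis by (simp add: orthogonal_def)
  qed
  have "\<exists>!w. w \<in> orthogonal_comp (span S) \<and> v - w \<in> span S"
    using assms unique by blast
  thus ?thesis unfolding perp_proj_def using assms by (blast intro: the1_equality)
qed

lemma perp_proj_in_orthogonal_comp:
  fixes S :: "'a::euclidean_space set"
  shows "perp_proj S v \<in> orthogonal_comp (span S)"
    and "v - perp_proj S v \<in> span S"
proof -
  obtain y z where y: "y \<in> span S" and z: "\<And>w. w \<in> span S \<Longrightarrow> orthogonal z w"
    and v: "v = y + z"
    by (rule orthogonal_subspace_decomp_exists[of S v]) blast
  have "z \<in> orthogonal_comp (span S)"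
    using z by (auto simp: orthogonal_comp_def orthogonal_commute)
  moreover have "v - z \<in> span S" using y v by simp
  ultimately have "perp_proj S v = z" by (rule perp_proj_unique)
  thus "perp_proj S v \<in> orthogonal_comp (span S)" "v - perp_proj S v \<in> span S"
    using \<open>z \<in> orthogonal_comp (span S)\<close> \<open>v - z \<in> span S\<close> by simp_all
qed

lemma linear_perp_proj:
  fixes S :: "'a::euclidean_space set"
  shows "linear (perp_proj S)"
proof (rule linearI)
  note P = perp_proj_in_orthogonal_comp[where S = S]
  fix a b :: 'a and r :: real
  have "(a + b) - (perp_proj S a + perp_proj S b) = (a - perp_proj S a) + (b - perp_proj S b)"
    by simp
  hence "(a + b) - (perp_proj S a + perp_proj S b) \<in> span S"
    using P(2) span_add by metis
  moreover have "perp_proj S a + perp_proj S b \<in> orthogonal_comp (span S)"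
    using P(1) subspace_orthogonal_comp subspace_add by blast
  ultimately show "perp_proj S (a + b) = perp_proj S a + perp_proj S b"
    by (intro perp_proj_unique)
  have "r *\<^sub>R a - r *\<^sub>R perp_proj S a = r *\<^sub>R (a - perp_proj S a)"
    by (simp add: algebra_simps)
  hence "r *\<^sub>R a - r *\<^sub>R perp_proj S a \<in> span S"
    using P(2) span_scale by metis
  moreover have "r *\<^sub>R perp_proj S a \<in> orthogonal_comp (span S)"
    using P(1) subspace_orthogonal_comp subspace_scale by blast
  ultimately show "perp_proj S (r *\<^sub>R a) = r *\<^sub>R perp_proj S a"
    by (intro perp_proj_unique)
qed

lemma perp_proj_span:
  fixes S :: "'a::euclidean_space set"
  assumes "x \<in> span S"
  shows "perp_proj S x = 0"
  by (rule perp_proj_unique) (auto simp: assms orthogonal_comp_def orthogonal_def)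

lemma inner_perp_proj:
  fixes S :: "'a::euclidean_space set"
  assumes "u \<in> orthogonal_comp (span S)"
  shows "u \<bullet> perp_proj S d = u \<bullet> d"
proof -
  have "u \<bullet> (d - perp_proj S d) = 0"
    using assms perp_proj_in_orthogonal_comp(2)[of d S]
    by (auto simp: orthogonal_comp_def orthogonal_def inner_commute)
  thus ?thesis by (simp add: inner_diff_right)
qed

lemma norm_diff_perp_proj_ge:
  fixes S :: "'a::euclidean_space set"
  assumes "u \<in> orthogonal_comp (span S)" "u \<noteq> 0"
  shows "norm u - (u \<bullet> d) / norm u \<le> norm (u - perp_proj S d)"
proof -
  have "(norm u)\<^sup>2 - u \<bullet> d = u \<bullet> (u - perp_proj S d)"
    using inner_perp_proj[OF assms(1)] by (simp add: inner_diff_right power2_norm_eq_inner)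
  also have "\<dots> \<le> norm u * norm (u - perp_proj S d)"
    by (rule norm_cauchy_schwarz)
  finally show ?thesis
    using assms(2) by (simp add: field_simps power2_eq_square)
qed

lemma linear_Zproj: "linear (Zproj X j)"
  unfolding Zproj_def by (rule linear_perp_proj)

lemma column_scaleR: "column j (r *\<^sub>R A) = r *\<^sub>R column j A"
  by (simp add: column_def vec_eq_iff)

lemma column_diff: "column j (A - B) = column j A - column j B"
  by (simp add: column_def vec_eq_iff)

lemma column_matrix_mult:
  fixes A :: "real^'k^'n" and B :: "real^'p^'k"
  shows "column j (A ** B) = (\<Sum>k\<in>UNIV. (B $ k $ j) *\<^sub>R column k A)"
  by (simp add: vec_eq_iff column_def matrix_matrix_mult_def mult.commute)

lemma Zproj_column_matrix_mult:
  fixes X :: "real^'p^'n" and B :: "real^'p^'p"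
  shows "Zproj X j (column j (X ** B)) = B $ j $ j *\<^sub>R Zproj X j (column j X)"
proof -
  have "Zproj X j (column k X) = 0" if "k \<noteq> j" for k
    unfolding Zproj_def using that by (auto intro: perp_proj_span span_base)
  hence "(\<Sum>k\<in>UNIV - {j}. B $ k $ j *\<^sub>R Zproj X j (column k X)) = 0"
    by simp
  thus ?thesis
    using linear_Zproj[of X j]
    by (simp add: column_matrix_mult linear_sum linear_cmul linear_add sum.remove[of UNIV j])
qed

lemma Zproj_column_matrix_mult_diff:
  fixes X ThetaStar :: "real^'p^'n" and B :: "real^'p^'p"
  assumes "B $ j $ j = 1"
  shows "Zproj X j (column j ((r *\<^sub>R X) ** B - ThetaStar))
    = Zproj X j (column j (r *\<^sub>R X) - column j ThetaStar)"
proof -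
  have "Zproj X j (column j ((r *\<^sub>R X) ** B)) = Zproj X j (column j (r *\<^sub>R X))"
    unfolding scalar_matrix_assoc[symmetric] column_scaleR linear_cmul[OF linear_Zproj]
    using Zproj_column_matrix_mult[where X = X and B = B and j = j] assms by simp
  thus ?thesis
    unfolding column_diff linear_diff[OF linear_Zproj] by simp
qed

lemma objective_basic_inequality:
  fixes X ThetaHat ThetaStar :: "real^'p^'n" and u :: "'p \<Rightarrow> real^'n"
  assumes optimal: "objective lam X ThetaHat \<le> objective lam X ThetaStar"
    and noise: "\<And>j. Zproj X j (column j ((1 / sqrt (real CARD('n))) *\<^sub>R X) - column j ThetaStar) = u j"
    and nonzero: "\<And>j. u j \<noteq> 0"
  shows "lam * (norm21 UNIV ThetaHat - norm21 UNIV ThetaStar)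
    \<le> (\<Sum>j\<in>UNIV. (u j \<bullet> column j (ThetaHat - ThetaStar)) / norm (u j))"
proof -
  let ?D = "ThetaHat - ThetaStar" and ?y = "(1 / sqrt (real CARD('n))) *\<^sub>R X"
  have term_eq: "Zproj X j (column j ?y - column j ThetaHat) = u j - Zproj X j (column j ?D)" for j
  proof -
    have "column j ?y - column j ThetaHat = (column j ?y - column j ThetaStar) - column j ?D"
      by (simp add: column_diff)
    hence "Zproj X j (column j ?y - column j ThetaHat)
        = Zproj X j (column j ?y - column j ThetaStar) - Zproj X j (column j ?D)"
      by (simp only: linear_diff[OF linear_Zproj, of X j "column j ?y - column j ThetaStar"])
    thus ?thesis by (simp only: noise)
  qed
  have "u j \<in> orthogonal_comp (span {column k X | k. k \<noteq> j})" for j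
    unfolding noise[of j, symmetric] Zproj_def by (rule perp_proj_in_orthogonal_comp(1))
  hence term_ge: "norm (u j) - (u j \<bullet> column j ?D) / norm (u j)
      \<le> norm (u j - Zproj X j (column j ?D))" for j
    unfolding Zproj_def using nonzero by (rule norm_diff_perp_proj_ge)
  have "(\<Sum>j\<in>UNIV. norm (u j)) - (\<Sum>j\<in>UNIV. (u j \<bullet> column j ?D) / norm (u j))
      \<le> (\<Sum>j\<in>UNIV. norm (u j - Zproj X j (column j ?D)))"
    using sum_mono[OF term_ge] by (simp add: sum_subtractf)
  moreover have "objective lam X ThetaHat
      = (\<Sum>j\<in>UNIV. norm (u j - Zproj X j (column j ?D))) + lam * norm21 UNIV ThetaHat"
    unfolding objective_def term_eq ..
  moreover have "objective lam X ThetaStar = (\<Sum>j\<in>UNIV. norm (u j)) + lam * norm21 UNIV ThetaStar"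
    unfolding objective_def noise ..
  ultimately show ?thesis
    using optimal by (simp add: right_diff_distrib)
qed

lemma sum_inner_normalized_columns_le:
  fixes u :: "'p::finite \<Rightarrow> real^'n::finite" and D :: "real^'p^'n"
  shows "(\<Sum>j\<in>UNIV. (u j \<bullet> column j D) / norm (u j))
    \<le> Max (range (\<lambda>i. sqrt (\<Sum>j\<in>UNIV. (u j $ i)\<^sup>2 / (norm (u j))\<^sup>2))) * norm21 UNIV D"
proof -
  define w where "w i = (\<chi> j. u j $ i / norm (u j))" for i
  define m where "m = Max (range (\<lambda>i. sqrt (\<Sum>j\<in>UNIV. (u j $ i)\<^sup>2 / (norm (u j))\<^sup>2)))"
  have norm_w: "norm (w i) \<le> m" for i
    by (simp add: m_def w_def norm_vec_def L2_set_def power_divide)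
  have "(\<Sum>j\<in>UNIV. (u j \<bullet> column j D) / norm (u j))
      = (\<Sum>j\<in>UNIV. \<Sum>i\<in>UNIV. u j $ i * D $ i $ j / norm (u j))"
    by (simp add: inner_vec_def column_def sum_divide_distrib)
  also have "\<dots> = (\<Sum>i\<in>UNIV. w i \<bullet> D $ i)"
    by (subst sum.swap) (simp add: inner_vec_def w_def)
  also have "\<dots> \<le> (\<Sum>i\<in>UNIV. m * norm (D $ i))"
  proof (rule sum_mono)
    fix i
    have "w i \<bullet> D $ i \<le> norm (w i) * norm (D $ i)" by (rule norm_cauchy_schwarz)
    also have "\<dots> \<le> m * norm (D $ i)" using norm_w by (simp add: mult_right_mono)
    finally show "w i \<bullet> D $ i \<le> m * norm (D $ i)" .
  qed
  finally show ?thesis by (simp add: m_def norm21_def sum_distrib_left)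
qed

lemma normalized_rows_scaleR:
  fixes u :: "'p::finite \<Rightarrow> real^'n" and a :: "'p \<Rightarrow> real"
  assumes "\<And>j. a j \<noteq> 0"
  shows "(\<Sum>j\<in>UNIV. ((a j *\<^sub>R u j) $ i)\<^sup>2 / (norm (a j *\<^sub>R u j))\<^sup>2)
    = (\<Sum>j\<in>UNIV. (u j $ i)\<^sup>2 / (norm (u j))\<^sup>2)"
  using assms by (simp add: power_mult_distrib)

lemma Max_normalized_rows_pos:
  fixes u :: "'p::finite \<Rightarrow> real^'n::finite"
  assumes "u j \<noteq> 0"
  shows "0 < Max (range (\<lambda>i. sqrt (\<Sum>j\<in>UNIV. (u j $ i)\<^sup>2 / (norm (u j))\<^sup>2)))"
proof -
  obtain i where "u j $ i \<noteq> 0" using assms by (auto simp: vec_eq_iff)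
  hence "0 < (u j $ i)\<^sup>2 / (norm (u j))\<^sup>2" using assms by simp
  also have "\<dots> \<le> (\<Sum>j\<in>UNIV. (u j $ i)\<^sup>2 / (norm (u j))\<^sup>2)"
    by (rule member_le_sum) auto
  finally have "0 < sqrt (\<Sum>j\<in>UNIV. (u j $ i)\<^sup>2 / (norm (u j))\<^sup>2)" by simp
  also have "\<dots> \<le> Max (range (\<lambda>i. sqrt (\<Sum>j\<in>UNIV. (u j $ i)\<^sup>2 / (norm (u j))\<^sup>2)))"
    by (rule Max_ge) auto
  finally show ?thesis .
qed

lemma norm21_nonneg: "0 \<le> norm21 K A"
  unfolding norm21_def by (simp add: sum_nonneg)

lemma norm21_split: "norm21 UNIV A = norm21 K A + norm21 (-K) A"
  unfolding norm21_def using sum.Int_Diff[of UNIV _ K] by (simp add: Compl_eq_Diff_UNIV)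

lemma norm21_decomposable:
  fixes Th ThStar :: "real^'p^'n"
  assumes "\<And>i. i \<notin> K \<Longrightarrow> ThStar $ i = 0"
  shows "norm21 (-K) (Th - ThStar) - norm21 K (Th - ThStar) \<le> norm21 UNIV Th - norm21 UNIV ThStar"
proof -
  have "norm21 (-K) Th = norm21 (-K) (Th - ThStar)" "norm21 (-K) ThStar = 0"
    using assms by (simp_all add: norm21_def)
  moreover have "norm21 K ThStar - norm21 K (Th - ThStar) \<le> norm21 K Th"
    unfolding norm21_def sum_subtractf[symmetric]
  proof (rule sum_mono)
    fix i
    show "norm (ThStar $ i) - norm ((Th - ThStar) $ i) \<le> norm (Th $ i)"
      using norm_triangle_ineq2[of "ThStar $ i" "Th $ i"] by (simp add: norm_minus_commute)
  qed
  ultimately show ?thesis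
    using norm21_split[of Th K] norm21_split[of ThStar K] by simp
qed

lemma cone_of_basic_inequality:
  fixes DI DO m lam c :: real
  assumes "m > 0" "c > 1" "lam \<ge> (c + 1) / (c - 1) * m" "DO \<ge> 0"
    and basic: "lam * (DI - DO) \<le> m * (DI + DO)"
  shows "DI \<le> c * DO"
proof (rule ccontr)
  assume "\<not> DI \<le> c * DO"
  hence "DI > c * DO" by simp
  moreover have "DO \<le> c * DO" using assms(2,4) by (simp add: mult_le_cancel_right1)
  ultimately have "DI - DO > 0" by linarith
  have "(c + 1) * m \<le> (c - 1) * lam" using assms(2,3) by (simp add: field_simps)
  hence "(c + 1) * m * (DI - DO) \<le> (c - 1) * (lam * (DI - DO))"
    using \<open>DI - DO > 0\<close> by (simp add: mult_right_mono)
  also have "\<dots> \<le> (c - 1) * (m * (DI + DO))" using assms(2) basic by simp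
  finally have "m * (DI - c * DO) \<le> 0" by (simp add: algebra_simps)
  thus False using \<open>DI > c * DO\<close> assms(1) by (simp add: mult_le_0_iff)
qed

theorem mainTheorem4:
  fixes X E :: "real^'p^'n" and Sigma S :: "real^'p^'p" and Out :: "'n set"
    and M_E lam c :: real
    and Omega B :: "real^'p^'p" and ThetaStar Xi Eps ThetaHat :: "real^'p^'n"
  assumes Sigma_pd: "pos_def Sigma"
    and E_I: "\<forall>i\<in>-Out. E $ i = 0"
    and S_sqrt: "pos_def S" "S ** S = matrix_inv Sigma"
    and E_bound: "\<forall>i. norm ((E ** S) $ i) \<le> M_E * sqrt (real CARD('p))"
    and Omega_def: "Omega = matrix_inv Sigma"
    and B_def: "B = (\<chi> k j. Omega $ k $ j / Omega $ j $ j)"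
    and ThetaStar_def: "ThetaStar = (1 / sqrt (real CARD('n))) *\<^sub>R (E ** B)"
    and Xi_def: "Xi = ((1 / sqrt (real CARD('n))) *\<^sub>R X) ** B - ThetaStar"
    and Eps_def: "Eps = (\<chi> i j. sqrt (real CARD('n)) * sqrt (Omega $ j $ j) * Xi $ i $ j)"
    and ThetaHat_min: "\<forall>Th. objective lam X ThetaHat \<le> objective lam X Th"
    and Z_nonzero: "\<forall>j. Zproj X j (column j Eps) \<noteq> 0"
    and c_gt: "c > 1"
    and lam_ge: "lam \<ge> (c + 1) / (c - 1) *
        Max (range (\<lambda>i. sqrt (\<Sum>j\<in>UNIV.
            (Zproj X j (column j Eps) $ i)\<^sup>2 / (norm (Zproj X j (column j Eps)))\<^sup>2)))"
  shows "norm21 (-Out) (ThetaHat - ThetaStar) \<le> c * norm21 Out (ThetaHat - ThetaStar)"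
proof -
  define u where "u j = Zproj X j (column j Xi)" for j
  define a where "a j = sqrt (real CARD('n)) * sqrt (Omega $ j $ j)" for j
  define m where "m = Max (range (\<lambda>i. sqrt (\<Sum>j\<in>UNIV. (u j $ i)\<^sup>2 / (norm (u j))\<^sup>2)))"
  define D where "D = ThetaHat - ThetaStar"
  have "column j Eps = a j *\<^sub>R column j Xi" for j
    by (simp add: a_def Eps_def column_def vec_eq_iff)
  hence Eps_u: "Zproj X j (column j Eps) = a j *\<^sub>R u j" for j
    by (simp add: u_def linear_cmul[OF linear_Zproj])
  hence "a j \<noteq> 0" "u j \<noteq> 0" for j
    using Z_nonzero by auto
  hence a_nonzero: "a j \<noteq> 0" and u_nonzero: "u j \<noteq> 0" and B_diag: "B $ j $ j = 1" for j
    by (auto simp: a_def B_def)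
  have noise: "Zproj X j (column j ((1 / sqrt (real CARD('n))) *\<^sub>R X) - column j ThetaStar) = u j"
    for j
    unfolding u_def Xi_def by (rule Zproj_column_matrix_mult_diff[symmetric, OF B_diag])
  have lam_ge_m: "lam \<ge> (c + 1) / (c - 1) * m"
    using lam_ge unfolding Eps_u normalized_rows_scaleR[OF a_nonzero] m_def .
  have m_pos: "m > 0"
    unfolding m_def by (rule Max_normalized_rows_pos[OF u_nonzero])
  hence "lam \<ge> 0"
    using lam_ge_m c_gt by (smt (verit) divide_pos_pos mult_pos_pos)
  moreover have "ThetaStar $ i = 0" if "i \<notin> Out" for i
    using E_I that by (simp add: ThetaStar_def vec_eq_iff matrix_matrix_mult_def)
  ultimately have "lam * (norm21 (-Out) D - norm21 Out D)
      \<le> lam * (norm21 UNIV ThetaHat - norm21 UNIV ThetaStar)"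
    unfolding D_def by (intro mult_left_mono norm21_decomposable)
  also have "\<dots> \<le> (\<Sum>j\<in>UNIV. (u j \<bullet> column j D) / norm (u j))"
    unfolding D_def by (rule objective_basic_inequality[OF ThetaHat_min[rule_format] noise u_nonzero])
  also have "\<dots> \<le> m * norm21 UNIV D"
    unfolding m_def by (rule sum_inner_normalized_columns_le)
  also have "\<dots> = m * (norm21 (-Out) D + norm21 Out D)"
    using norm21_split[of D Out] by (simp add: add.commute)
  finally show ?thesis
    unfolding D_def[symmetric] by (rule cone_of_basic_inequality[OF m_pos c_gt lam_ge_m norm21_nonneg])
qed

end
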